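(* Let $(\mathcal U,\mathcal F)$ be a strongly accessible set system and $S$ a nonempty maximal solution with canonical order $s_1,\dots,s_{|S|}$. Let $j$ be the smallest index such that $\mathrm{complete}(S[j])=S$, and suppose $j>1$. Put $\mathrm{pi}(S)=s_j$, $\mathrm{core}(S)=S[j-1]$, $\mathrm{parent}(S)=\mathrm{complete}(\mathrm{core}(S))$. Then $\mathrm{parent}(S)$ is a maximal solution with $\mathrm{parent}(S)\prec S$ (in particular $\mathrm{parent}(S)\neq S$), $\mathrm{core}(S)\subseteq \mathrm{parent}(S)$, $\mathrm{pi}(S)\notin\mathrm{core}(S)$, $\mathrm{core}(S)\cup\{\mathrm{pi}(S)\}\in\mathcal F$, and $S=\mathrm{complete}(\mathrm{core}(S)\cup\{\mathrm{pi}(S)\})$.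
   Context: A set system is a pair $(\mathcal U,\mathcal F)$ with $\mathcal U$ finite, $\mathcal F\subseteq 2^{\mathcal U}$, $\emptyset\in\mathcal F$; $S\in\mathcal F$ is maximal if there is no $Y\in\mathcal F$ with $S\subsetneq Y$. Strongly accessible: for all $X,Y\in\mathcal F$ with $X\subsetneq Y$ there is $z\in Y\setminus X$ with $X\cup\{z\}\in\mathcal F$. Elements of $\mathcal U$ are identified with distinct integers. For $X,A\subseteq\mathcal U$, $X^+_A=\{a\in A\setminus X: X\cup\{a\}\in\mathcal F\}$. $Z=\{x\in\mathcal U:\{x\}\in\mathcal F\}$, $\mathrm{source}(X)=\min(X\cap Z)$. For $X\in\mathcal F$ and $A\subseteq\mathcal U$, $\mathrm{complete}(X,A)$ is obtained by repeatedly replacing $X$ with $X\cup\{\min X^+_A\}$ while $X^+_A\neq\emptyset$, then returning $X$; $\mathrm{complete}(X)=\mathrm{complete}(X,\mathcal U)$. The canonical order of a nonempty maximal solution $S$ is $s_1=\mathrm{source}(S)$ and $s_{i+1}=\min S[i]^+_S$ while this set is nonempty, with $S[i]=\{s_1,\dots,s_i\}$. For maximal solutions $S\ne T$ with canonical orders $(s_i)$, $(t_i)$, let $i$ be the smallest index with $s_i\neq t_i$; $S\prec T$ iff $s_i<t_i$. *)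

theory Defs
  imports Main
begin

definition set_system :: "int set \<Rightarrow> int set set \<Rightarrow> bool" where
  "set_system U F \<longleftrightarrow> finite U \<and> F \<subseteq> Pow U \<and> {} \<in> F"

definition strongly_accessible :: "int set set \<Rightarrow> bool" where
  "strongly_accessible F \<longleftrightarrow>
     (\<forall>X\<in>F. \<forall>Y\<in>F. X \<subset> Y \<longrightarrow> (\<exists>z\<in>Y - X. insert z X \<in> F))"

definition maximal :: "int set set \<Rightarrow> int set \<Rightarrow> bool" where
  "maximal F S \<longleftrightarrow> S \<in> F \<and> \<not> (\<exists>Y\<in>F. S \<subset> Y)"

definition ext :: "int set set \<Rightarrow> int set \<Rightarrow> int set \<Rightarrow> int set" where
  "ext F X A = {a \<in> A - X. insert a X \<in> F}"

definition singletons :: "int set set \<Rightarrow> int set \<Rightarrow> int set" where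
  "singletons F U = {x \<in> U. {x} \<in> F}"

definition source :: "int set set \<Rightarrow> int set \<Rightarrow> int set \<Rightarrow> int" where
  "source F U X = Min (X \<inter> singletons F U)"

function complete_on :: "int set set \<Rightarrow> int set \<Rightarrow> int set \<Rightarrow> int set" where
  "complete_on F A X =
     (if \<not> finite A \<or> ext F X A = {} then X
      else complete_on F A (insert (Min (ext F X A)) X))"
  by pat_completeness auto
termination
proof (relation "measure (\<lambda>(F, A, X). card (A - X))")
  show "wf (measure (\<lambda>(F, A, X). card (A - X)))" by simp
next
  fix F A X
  assume h: "\<not> (\<not> finite A \<or> ext F X A = {})"
  then have fin: "finite A" and ne: "ext F X A \<noteq> {}" by auto
  have "finite (ext F X A)" using fin unfolding ext_def by auto
  then have m: "Min (ext F X A) \<in> ext F X A" using ne by simp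
  then have "Min (ext F X A) \<in> A - X" unfolding ext_def by auto
  then have "card (A - insert (Min (ext F X A)) X) < card (A - X)"
    using fin by (metis Diff_insert card_Diff1_less finite_Diff)
  then show "((F, A, insert (Min (ext F X A)) X), F, A, X)
             \<in> measure (\<lambda>(F, A, X). card (A - X))" by simp
qed

declare complete_on.simps [simp del]

definition complete :: "int set set \<Rightarrow> int set \<Rightarrow> int set \<Rightarrow> int set" where
  "complete F U X = complete_on F U X"

text \<open>Canonical order of S: s_1 = source(S) = min (S[0])^+_S (since S[0] = {}),
  s_{i+1} = min S[i]^+_S while nonempty.  Built as a list by iteration.\<close>
fun canon_seq :: "int set set \<Rightarrow> int set \<Rightarrow> nat \<Rightarrow> int list" where
  "canon_seq F S 0 = []"
| "canon_seq F S (Suc i) =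
     (let L = canon_seq F S i; C = ext F (set L) S
      in if C = {} then L else L @ [Min C])"

definition canon :: "int set set \<Rightarrow> int set \<Rightarrow> int list" where
  "canon F S = canon_seq F S (card S)"

definition prefix_set :: "int set set \<Rightarrow> int set \<Rightarrow> nat \<Rightarrow> int set" where
  "prefix_set F S i = set (take i (canon F S))"

definition prec :: "int set set \<Rightarrow> int set \<Rightarrow> int set \<Rightarrow> bool" where
  "prec F S T \<longleftrightarrow> S \<noteq> T \<and>
     (\<exists>i. i < length (canon F S) \<and> i < length (canon F T) \<and>
          take i (canon F S) = take i (canon F T) \<and> canon F S ! i < canon F T ! i)"

end

theory Submission
  imports Defs
begin

text \<open>Let \<open>core = S[j-1]\<close> and \<open>pi = min core\<^sup>+\<^sub>S\<close>. Completion of \<open>core\<close> first adds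
  \<open>m = min core\<^sup>+\<^sub>U \<le> pi\<close>; if \<open>m = pi\<close> it would rebuild \<open>S\<close>, contradicting the minimality
  of \<open>j\<close>, so \<open>m < pi\<close>. The canonical order of \<open>parent(S) \<supseteq> core\<close> then follows that of
  \<open>S\<close> as long as they agree, can only choose smaller elements, and at position \<open>j\<close> at the
  latest chooses something \<open>\<le> m < pi\<close>.\<close>

lemma finite_ext: "finite A \<Longrightarrow> finite (ext F X A)"
  by (simp add: ext_def)

lemma Min_ext_in: "finite A \<Longrightarrow> ext F X A \<noteq> {} \<Longrightarrow> Min (ext F X A) \<in> ext F X A"
  by (simp add: finite_ext)

lemma ext_nonempty_if_psubset:
  assumes "strongly_accessible F" "X \<in> F" "Y \<in> F" "X \<subset> Y"
  shows "ext F X Y \<noteq> {}"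
  using assms unfolding strongly_accessible_def ext_def by blast

lemma complete_on_step:
  assumes "finite A" "ext F X A \<noteq> {}"
  shows "complete_on F A X = complete_on F A (insert (Min (ext F X A)) X)"
  using assms by (subst complete_on.simps) simp

lemma subset_complete_on: "finite A \<Longrightarrow> X \<subseteq> complete_on F A X"
proof (induction F A X rule: complete_on.induct)
  case (1 F A X)
  then show ?case
    by (cases "ext F X A = {}") (auto simp: complete_on.simps)
qed

lemma ext_complete_on: "finite A \<Longrightarrow> ext F (complete_on F A X) A = {}"
proof (induction F A X rule: complete_on.induct)
  case (1 F A X)
  then show ?case
    by (cases "ext F X A = {}") (auto simp: complete_on.simps)
qed

lemma complete_on_in_family: "finite A \<Longrightarrow> X \<in> F \<Longrightarrow> complete_on F A X \<in> F"
proof (induction F A X rule: complete_on.induct)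
  case (1 F A X)
  show ?case
  proof (cases "ext F X A = {}")
    case True
    then show ?thesis using 1 by (simp add: complete_on.simps)
  next
    case False
    have "insert (Min (ext F X A)) X \<in> F"
      using Min_ext_in[OF "1.prems"(1) False] by (simp add: ext_def)
    then show ?thesis
      using 1 False by (simp add: complete_on_step)
  qed
qed

lemma
  assumes "set_system U F" "strongly_accessible F" "X \<in> F"
  shows subset_complete: "X \<subseteq> complete F U X"
    and maximal_complete: "maximal F (complete F U X)"
proof -
  have finU: "finite U" and FU: "F \<subseteq> Pow U"
    using assms(1) by (auto simp: set_system_def)
  let ?R = "complete F U X"
  show "X \<subseteq> ?R"
    using subset_complete_on[OF finU] by (simp add: complete_def)
  have RF: "?R \<in> F"
    using complete_on_in_family[OF finU assms(3)] by (simp add: complete_def)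
  have no_ext: "ext F ?R U = {}"
    using ext_complete_on[OF finU] by (simp add: complete_def)
  have "\<not> ?R \<subset> Y" if "Y \<in> F" for Y
  proof
    assume "?R \<subset> Y"
    then obtain z where "z \<in> Y - ?R" "insert z ?R \<in> F"
      using ext_nonempty_if_psubset[OF assms(2) RF \<open>Y \<in> F\<close>] by (auto simp: ext_def)
    moreover have "z \<in> U" using FU \<open>Y \<in> F\<close> \<open>z \<in> Y - ?R\<close> by auto
    ultimately show False using no_ext by (auto simp: ext_def)
  qed
  then show "maximal F ?R"
    using RF by (auto simp: maximal_def)
qed

lemma canon_seq_append: "\<exists>ys. canon_seq F T (i + d) = canon_seq F T i @ ys"
proof (induction d)
  case (Suc d)
  then show ?case by (auto simp: Let_def)
qed simp

lemma set_canon_seq_mono: "i \<le> k \<Longrightarrow> set (canon_seq F T i) \<subseteq> set (canon_seq F T k)"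
  using canon_seq_append[of F T i "k - i"] by auto

declare canon_seq.simps(2) [simp del]

context
  fixes F :: "int set set"
  assumes strongly_accessible: "strongly_accessible F"
    and empty_in_F: "{} \<in> F"
begin

lemma canon_seq_invariant:
  assumes "T \<in> F" "finite T" "i \<le> card T"
  shows "length (canon_seq F T i) = i \<and> distinct (canon_seq F T i) \<and>
         set (canon_seq F T i) \<subseteq> T \<and> set (canon_seq F T i) \<in> F"
  using assms(3)
proof (induction i)
  case 0
  then show ?case using empty_in_F by simp
next
  case (Suc i)
  define L where "L = canon_seq F T i"
  have IH: "length L = i" "distinct L" "set L \<subseteq> T" "set L \<in> F"
    using Suc by (auto simp: L_def)
  then have "card (set L) < card T"
    using Suc.prems by (simp add: distinct_card)
  then have "set L \<subset> T" using IH(3) by auto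
  then have ne: "ext F (set L) T \<noteq> {}"
    using ext_nonempty_if_psubset[OF strongly_accessible IH(4) assms(1)] by blast
  have "canon_seq F T (Suc i) = L @ [Min (ext F (set L) T)]"
    using ne by (simp add: L_def Let_def canon_seq.simps)
  then show ?case
    using IH Min_ext_in[OF assms(2) ne] by (auto simp: ext_def)
qed

lemma length_canon: "T \<in> F \<Longrightarrow> finite T \<Longrightarrow> length (canon F T) = card T"
  using canon_seq_invariant[of T "card T"] by (simp add: canon_def)

lemma take_canon:
  assumes "T \<in> F" "finite T" "i \<le> card T"
  shows "take i (canon F T) = canon_seq F T i"
proof -
  obtain ys where "canon F T = canon_seq F T i @ ys"
    using canon_seq_append[of F T i "card T - i"] assms(3) by (auto simp: canon_def)
  then show ?thesis
    using canon_seq_invariant[OF assms] by simp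
qed

lemma prefix_set_eq:
  "T \<in> F \<Longrightarrow> finite T \<Longrightarrow> i \<le> card T \<Longrightarrow> prefix_set F T i = set (canon_seq F T i)"
  by (simp add: prefix_set_def take_canon)

lemma
  assumes "T \<in> F" "finite T" "i < card T"
  shows canon_nth: "canon F T ! i = Min (ext F (set (canon_seq F T i)) T)"
    and canon_seq_Suc: "canon_seq F T (Suc i) = canon_seq F T i @ [canon F T ! i]"
proof -
  let ?E = "ext F (set (canon_seq F T i)) T"
  have len: "length (canon_seq F T i) = i" "length (canon_seq F T (Suc i)) = Suc i"
    using canon_seq_invariant[OF assms(1,2), of i] canon_seq_invariant[OF assms(1,2), of "Suc i"]
      assms(3) by simp_all
  have "?E \<noteq> {}"
    using len by (auto simp: Let_def canon_seq.simps split: if_splits)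
  then have step: "canon_seq F T (Suc i) = canon_seq F T i @ [Min ?E]"
    by (simp add: Let_def canon_seq.simps)
  have "canon F T ! i = take (Suc i) (canon F T) ! i" by simp
  also have "\<dots> = Min ?E"
    using take_canon[OF assms(1,2), of "Suc i"] assms(3) step len(1) by (simp add: nth_append)
  finally show "canon F T ! i = Min ?E" .
  with step show "canon_seq F T (Suc i) = canon_seq F T i @ [canon F T ! i]" by simp
qed

lemma canon_nth_in_ext:
  assumes "T \<in> F" "finite T" "i < card T"
  shows "canon F T ! i \<in> ext F (set (canon_seq F T i)) T"
  using canon_seq_invariant[OF assms(1,2), of "Suc i"] canon_seq_Suc[OF assms] assms(3)
  by (auto simp: ext_def)

lemma canon_nth_le:
  assumes "T \<in> F" "finite T" "i < card T" "a \<in> ext F (set (canon_seq F T i)) T"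
  shows "canon F T ! i \<le> a"
  using assms(4) by (simp add: canon_nth[OF assms(1-3)] finite_ext[OF assms(2)])

text \<open>Each \<open>s\<^sub>k\<^sub>+\<^sub>1\<close> with \<open>k < n\<close> is also a candidate for \<open>T\<close>, so while the two
  canonical orders agree \<open>T\<close> can only choose smaller elements; at position \<open>n\<close> the
  candidate \<open>m\<close> forces a strict drop.\<close>
lemma canon_lex_less:
  assumes S: "S \<in> F" "finite S" and T: "T \<in> F" "finite T"
    and n: "n < card S" and sub: "set (canon_seq F S n) \<subseteq> T"
    and m: "m \<in> ext F (set (canon_seq F S n)) T" "m < canon F S ! n"
  shows "\<exists>i\<le>n. i < card T \<and> canon_seq F T i = canon_seq F S i \<and>
                canon F T ! i < canon F S ! i"
proof -
  define good where "good i \<longleftrightarrow> i < card T \<and> canon_seq F T i = canon_seq F S i \<and>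
                                canon F T ! i < canon F S ! i" for i
  have card_lt: "k < card T" if "k \<le> n" "a \<in> ext F (set (canon_seq F S k)) T" for k a
  proof -
    have "length (canon_seq F S k) = k" "distinct (canon_seq F S k)"
      using canon_seq_invariant[OF S, of k] n that(1) by auto
    then have "card (set (canon_seq F S k)) = k" by (metis distinct_card)
    moreover have "set (canon_seq F S k) \<subset> T"
      using sub set_canon_seq_mono[OF that(1)] that(2) by (auto simp: ext_def)
    ultimately show ?thesis by (metis psubset_card_mono[OF T(2)])
  qed
  have agree: "(\<exists>i<k. good i) \<or> canon_seq F T k = canon_seq F S k" if "k \<le> n" for k
    using that
  proof (induction k)
    case (Suc k)
    show ?case
    proof (cases "\<exists>i<k. good i")
      case False
      then have L: "canon_seq F T k = canon_seq F S k" using Suc by auto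
      let ?s = "canon F S ! k"
      have "set (canon_seq F S (Suc k)) \<subseteq> set (canon_seq F S n)"
        using set_canon_seq_mono[OF Suc.prems] .
      then have "?s \<in> set (canon_seq F S n)"
        using canon_seq_Suc[OF S, of k] Suc.prems n by simp
      then have sT: "?s \<in> ext F (set (canon_seq F T k)) T"
        using canon_nth_in_ext[OF S, of k] Suc.prems n sub L by (auto simp: ext_def)
      have kT: "k < card T" using card_lt[of k ?s] sT L Suc.prems by simp
      have "canon F T ! k \<le> ?s" using canon_nth_le[OF T kT sT] .
      then have "good k \<or> canon F T ! k = ?s" using kT L by (auto simp: good_def)
      moreover have "canon_seq F S (Suc k) = canon_seq F S k @ [?s]"
        using canon_seq_Suc[OF S, of k] Suc.prems n by simp
      ultimately show ?thesis
        using canon_seq_Suc[OF T kT] L by (auto simp only: less_Suc_eq)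
    qed (blast intro: less_SucI)
  qed simp
  have good_n: "good n" if L: "canon_seq F T n = canon_seq F S n"
  proof -
    have nT: "n < card T" using card_lt[OF order_refl m(1)] .
    have "canon F T ! n \<le> m" using canon_nth_le[OF T nT, of m] m(1) L by simp
    then show ?thesis using nT L m(2) unfolding good_def by simp
  qed
  have "\<exists>i\<le>n. good i"
    using agree[OF order_refl] good_n by (metis less_imp_le order_refl)
  then show ?thesis unfolding good_def .
qed

end

lemma prec_complete_prefix:
  assumes sys: "set_system U F" and SA: "strongly_accessible F" and SF: "S \<in> F"
    and n: "n < card S"
    and S_eq: "complete F U (insert (canon F S ! n) (prefix_set F S n)) = S"
    and P_ne: "complete F U (prefix_set F S n) \<noteq> S"
  shows "prec F (complete F U (prefix_set F S n)) S"
proof -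
  have finU: "finite U" and FU: "F \<subseteq> Pow U" and e: "{} \<in> F"
    using sys by (auto simp: set_system_def)
  have finS: "finite S" using SF FU finU finite_subset by blast
  define core where "core = set (canon_seq F S n)"
  define P where "P = complete F U core"
  have core_pre: "prefix_set F S n = core"
    using prefix_set_eq[OF SA e SF finS] n by (simp add: core_def)
  have coreF: "core \<in> F"
    using canon_seq_invariant[OF SA e SF finS, of n] n by (simp add: core_def)
  have PF: "P \<in> F" and core_P: "core \<subseteq> P"
    using maximal_complete[OF sys SA coreF] subset_complete[OF sys SA coreF]
    by (auto simp: P_def maximal_def)
  have finP: "finite P" using PF FU finU finite_subset by blast
  let ?pi = "canon F S ! n"
  have pi_U: "?pi \<in> ext F core U"
    using canon_nth_in_ext[OF SA e SF finS n] SF FU by (auto simp: core_def ext_def)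
  define m where "m = Min (ext F core U)"
  have m_ext: "m \<in> ext F core U" using Min_ext_in[OF finU] pi_U m_def by blast
  have P_step: "P = complete F U (insert m core)"
    using complete_on_step[OF finU] pi_U by (auto simp: P_def complete_def m_def)
  have "m \<noteq> ?pi" using P_step S_eq P_ne core_pre by (auto simp: P_def)
  moreover have "m \<le> ?pi" using pi_U finite_ext[OF finU] by (simp add: m_def)
  ultimately have m_lt: "m < ?pi" by simp
  have "m \<in> P"
    using subset_complete[OF sys SA, of "insert m core"] m_ext P_step by (auto simp: ext_def)
  then have "m \<in> ext F (set (canon_seq F S n)) P" using m_ext by (auto simp: ext_def core_def)
  then obtain i where "i \<le> n" "i < card P" "canon_seq F P i = canon_seq F S i"
    "canon F P ! i < canon F S ! i"
    using canon_lex_less[OF SA e SF finS PF finP n _ _ m_lt] core_P by (auto simp: core_def)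
  then show ?thesis
    using P_ne n take_canon[OF SA e SF finS, of i] take_canon[OF SA e PF finP, of i]
      length_canon[OF SA e] SF finS PF finP
    by (auto simp: prec_def P_def core_pre)
qed

theorem mainTheorem4:
  fixes U :: "int set" and F :: "int set set" and S :: "int set" and j :: nat
  assumes "set_system U F" and "strongly_accessible F"
    and "maximal F S" and "S \<noteq> {}"
    and "j \<in> {1..card S}" and "complete F U (prefix_set F S j) = S"
    and "\<forall>k\<in>{1..card S}. complete F U (prefix_set F S k) = S \<longrightarrow> j \<le> k"
    and "j > 1"
  shows "let pi = canon F S ! (j - 1);
             core = prefix_set F S (j - 1);
             parent = complete F U core
         in maximal F parent \<and> prec F parent S \<and> parent \<noteq> S \<and>
            core \<subseteq> parent \<and> pi \<notin> core \<and> insert pi core \<in> F \<and>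
            S = complete F U (insert pi core)"
proof -
  define n where "n = j - 1"
  have j: "j = Suc n" "n < card S" "1 \<le> n" using assms(5,8) by (auto simp: n_def)
  have e: "{} \<in> F" and SF: "S \<in> F" and finS: "finite S"
    using assms(1,3) by (auto simp: set_system_def maximal_def intro: finite_subset)
  let ?pi = "canon F S ! n" and ?core = "prefix_set F S n"
  have core: "?core = set (canon_seq F S n)" "?core \<in> F"
    using prefix_set_eq[OF assms(2) e SF finS] canon_seq_invariant[OF assms(2) e SF finS] j
    by auto
  have next_prefix: "prefix_set F S j = insert ?pi ?core" "?pi \<notin> ?core" "insert ?pi ?core \<in> F"
    using prefix_set_eq[OF assms(2) e SF finS, of j] canon_seq_Suc[OF assms(2) e SF finS]
      canon_seq_invariant[OF assms(2) e SF finS, of j] core(1) j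
    by auto
  have parent_ne: "complete F U ?core \<noteq> S" using assms(7) j by force
  show ?thesis
    using maximal_complete[OF assms(1,2) core(2)] subset_complete[OF assms(1,2) core(2)]
      prec_complete_prefix[OF assms(1,2) SF j(2) _ parent_ne] parent_ne next_prefix assms(6)
    by (simp add: Let_def n_def)
qed

end
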